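(* Let $J$ be a Jordan algebra with unit element $1$ over a field $F$ of characteristic $\neq 2,3$, and let $d$ be a derivation with invertible values of $J$. Let $I$ be a proper ideal of $J$ such that $I \not\subseteq \ker(d)$. Then: (a) $I$ is both a minimal and a maximal proper ideal of $J$, i.e. for all proper ideals $I_1, I_2$ of $J$ with $I_1 \subseteq I \subseteq I_2$ we have $I_2 = I$, and if $I_1 \neq 0$ then $I_1 = I$; (b) $I^3 = 0$, where $I^3 = I^2 I$.
   Context: A Jordan algebra is a commutative algebra satisfying $(x^2,y,x)=0$, where $(a,b,c)=(ab)c-a(bc)$. In a Jordan algebra $J$ with unit $1$, an element $x$ is invertible if there exists $y \in J$ with $xy = 1$ and $x^2 y = x$. A derivation with invertible values of $J$ is a nonzero derivation $d$ of $J$ such that for every $x \in J$, $d(x)$ is either invertible or equal to $0$. *)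

theory Defs
  imports Main "HOL.Vector_Spaces"
begin

definition assoc :: "('a::ab_group_add \<Rightarrow> 'a \<Rightarrow> 'a) \<Rightarrow> 'a \<Rightarrow> 'a \<Rightarrow> 'a \<Rightarrow> 'a" where
  "assoc m a b c = m (m a b) c - m a (m b c)"

definition jordan_algebra :: "('k::field \<Rightarrow> 'a::ab_group_add \<Rightarrow> 'a) \<Rightarrow> ('a \<Rightarrow> 'a \<Rightarrow> 'a) \<Rightarrow> bool" where
  "jordan_algebra sc m \<longleftrightarrow>
     Vector_Spaces.vector_space sc \<and>
     (\<forall>x y z. m (x + y) z = m x z + m y z) \<and>
     (\<forall>x y z. m x (y + z) = m x y + m x z) \<and>
     (\<forall>c x y. m (sc c x) y = sc c (m x y)) \<and>
     (\<forall>c x y. m x (sc c y) = sc c (m x y)) \<and>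
     (\<forall>x y. m x y = m y x) \<and>
     (\<forall>x y. assoc m (m x x) y x = 0)"

definition unit_elt :: "('a \<Rightarrow> 'a \<Rightarrow> 'a) \<Rightarrow> 'a \<Rightarrow> bool" where
  "unit_elt m e \<longleftrightarrow> (\<forall>x. m e x = x \<and> m x e = x)"

definition invertible_elt :: "('a \<Rightarrow> 'a \<Rightarrow> 'a) \<Rightarrow> 'a \<Rightarrow> 'a \<Rightarrow> bool" where
  "invertible_elt m e x \<longleftrightarrow> (\<exists>y. m x y = e \<and> m (m x x) y = x)"

definition derivation :: "('k::field \<Rightarrow> 'a::ab_group_add \<Rightarrow> 'a) \<Rightarrow> ('a \<Rightarrow> 'a \<Rightarrow> 'a) \<Rightarrow> ('a \<Rightarrow> 'a) \<Rightarrow> bool" where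
  "derivation sc m d \<longleftrightarrow> Vector_Spaces.linear sc sc d \<and> (\<forall>x y. d (m x y) = m (d x) y + m x (d y))"

definition derivation_inv_values ::
  "('k::field \<Rightarrow> 'a::ab_group_add \<Rightarrow> 'a) \<Rightarrow> ('a \<Rightarrow> 'a \<Rightarrow> 'a) \<Rightarrow> 'a \<Rightarrow> ('a \<Rightarrow> 'a) \<Rightarrow> bool" where
  "derivation_inv_values sc m e d \<longleftrightarrow>
     derivation sc m d \<and> (\<exists>x. d x \<noteq> 0) \<and> (\<forall>x. invertible_elt m e (d x) \<or> d x = 0)"

definition alg_ideal :: "('k::field \<Rightarrow> 'a::ab_group_add \<Rightarrow> 'a) \<Rightarrow> ('a \<Rightarrow> 'a \<Rightarrow> 'a) \<Rightarrow> 'a set \<Rightarrow> bool" where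
  "alg_ideal sc m I \<longleftrightarrow> module.subspace sc I \<and> (\<forall>x a. a \<in> I \<longrightarrow> m x a \<in> I \<and> m a x \<in> I)"

definition proper_ideal :: "('k::field \<Rightarrow> 'a::ab_group_add \<Rightarrow> 'a) \<Rightarrow> ('a \<Rightarrow> 'a \<Rightarrow> 'a) \<Rightarrow> 'a set \<Rightarrow> bool" where
  "proper_ideal sc m I \<longleftrightarrow> alg_ideal sc m I \<and> I \<noteq> UNIV"

definition set_prod :: "('k::field \<Rightarrow> 'a::ab_group_add \<Rightarrow> 'a) \<Rightarrow> ('a \<Rightarrow> 'a \<Rightarrow> 'a) \<Rightarrow> 'a set \<Rightarrow> 'a set \<Rightarrow> 'a set" where
  "set_prod sc m A B = module.span sc {m a b | a b. a \<in> A \<and> b \<in> B}"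

end

theory Submission
  imports Defs
begin

text \<open>Pick \<open>x\<^sub>0 \<in> I\<close> with \<open>d x\<^sub>0 \<noteq> 0\<close> and \<open>y\<close> with \<open>d(x\<^sub>0) y = 1\<close>; then \<open>1 = i + u\<close> with
  \<open>i = -x\<^sub>0 d(y) \<in> I\<close> and \<open>u = d(x\<^sub>1)\<close>, \<open>x\<^sub>1 = x\<^sub>0 y \<in> I\<close>. A nonzero value of \<open>d\<close> is invertible and
  so lies in no proper ideal; hence \<open>d(ab) = 0\<close> for \<open>a, b \<in> I\<close>, and every \<open>k \<in> I \<inter> ker d\<close>
  satisfies \<open>k d(a) = d(k a) = 0\<close>. For \<open>k = i\<^sup>2\<close> this gives \<open>i\<^sup>2 u = 0\<close>, and as \<open>u = 1 - i\<close> is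
  invertible, \<open>i\<^sup>2 = 0\<close>. By the linearized Jordan identity, multiplication by \<open>i\<close> is then
  nilpotent, so every \<open>z \<in> I \<inter> ker d\<close> satisfies \<open>z = z i = ((z i) i) i = 0\<close>. This gives
  \<open>I\<^sup>2 = 0\<close> and the minimality of \<open>I\<close>. For maximality, \<open>z\<close> in a proper ideal \<open>B \<supseteq> I\<close> is
  \<open>i z + d(x\<^sub>1) z\<close>, and \<open>d(x\<^sub>1) z = - x\<^sub>1 d(z) \<in> I\<close> because \<open>d(x\<^sub>1 z) \<in> B\<close> vanishes.\<close>

lemma cubic_polarization:
  fixes F :: "'a::ab_group_add \<Rightarrow> 'a \<Rightarrow> 'a \<Rightarrow> 'b::ab_group_add"
  assumes add1: "\<And>a b c w. F (a + b) c w = F a c w + F b c w"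
    and add2: "\<And>a b c w. F c (a + b) w = F c a w + F c b w"
    and add3: "\<And>a b c w. F c w (a + b) = F c w a + F c w b"
    and diagonal: "\<And>a. F a a a = 0"
    and double_eq_0: "\<And>v::'b. v + v = 0 \<Longrightarrow> v = 0"
  shows "F z x x + F x z x + F x x z = 0"
proof -
  have neg_additive: "f (- a) = - f a" if "\<And>a b. f (a + b) = f a + f b"
    for f :: "'a \<Rightarrow> 'b" and a
    by (metis add.right_inverse add_right_cancel add_0 that eq_neg_iff_add_eq_0)
  have neg1: "F (- a) c w = - F a c w" for a c w
    using neg_additive[of "\<lambda>a. F a c w"] add1 by blast
  have neg2: "F c (- a) w = - F c a w" for a c w
    using neg_additive[of "\<lambda>a. F c a w"] add2 by blast
  have neg3: "F c w (- a) = - F c w a" for a c w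
    using neg_additive[of "F c w"] add3 by blast
  define A where "A = F z x x + F x z x + F x x z"
  define B where "B = F z z x + F z x z + F x z z"
  have "F (x + z) (x + z) (x + z) = F x x x + A + B + F z z z"
    unfolding A_def B_def by (simp only: add1 add2 add3 add_ac)
  moreover have "F (x + - z) (x + - z) (x + - z) = F x x x - A + B - F z z z"
    unfolding A_def B_def
    by (simp only: add1 add2 add3 neg1 neg2 neg3 minus_minus diff_conv_add_uminus
        minus_add_distrib add_ac)
  ultimately have "A + A = 0"
    using diagonal[of "x + z"] diagonal[of "x + - z"] diagonal[of x] diagonal[of z]
    by (simp add: algebra_simps)
  then show ?thesis unfolding A_def by (rule double_eq_0)
qed

locale jordan_alg =
  fixes sc :: "'k::field \<Rightarrow> 'a::ab_group_add \<Rightarrow> 'a" and m :: "'a \<Rightarrow> 'a \<Rightarrow> 'a"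
  assumes jordan: "jordan_algebra sc m"
begin

lemma module: "module sc"
  using jordan module_iff_vector_space by (auto simp: jordan_algebra_def)

lemma mult_add_left: "m (x + y) z = m x z + m y z"
  and mult_add_right: "m x (y + z) = m x y + m x z"
  and mult_commute: "m x y = m y x"
  using jordan by (auto simp: jordan_algebra_def)

lemma jordan_identity: "m (m (m x x) y) x = m (m x x) (m y x)"
proof -
  have "assoc m (m x x) y x = 0"
    using jordan unfolding jordan_algebra_def by blast
  then show ?thesis
    unfolding assoc_def by (rule right_minus_eq[THEN iffD1])
qed

lemma mult_zero_left [simp]: "m 0 z = 0"
  using mult_add_left[of 0 0 z] by simp

lemma mult_minus_left: "m (- x) z = - m x z"
  using mult_add_left[of x "- x" z] by (simp add: eq_neg_iff_add_eq_0 add.commute)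

lemma mult_minus_right: "m z (- x) = - m z x"
  using mult_minus_left[of x z] by (simp add: mult_commute)

lemma mult_diff_left: "m (x - y) z = m x z - m y z"
  by (simp only: diff_conv_add_uminus mult_add_left mult_minus_left)

lemma mult_diff_right: "m z (x - y) = m z x - m z y"
  by (simp only: diff_conv_add_uminus mult_add_right mult_minus_right)

lemmas mult_distribs = mult_add_left mult_add_right mult_minus_left mult_minus_right
  mult_diff_left mult_diff_right

lemma double_eq_0:
  fixes x :: 'a
  assumes "(2::'k) \<noteq> 0" and "x + x = 0"
  shows "x = 0"
proof -
  interpret module sc by (rule module)
  have "sc 2 x = x + x"
    by (metis one_add_one scale_left_distrib scale_one)
  then have "sc (inverse 2) (sc 2 x) = 0"
    using assms(2) by simp
  then show ?thesis
    using assms(1) by simp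
qed

lemma jordan_identity_linearized:
  assumes "(2::'k) \<noteq> 0"
  shows "m (m (m z x) x) x + m (m (m z x) x) x + m (m (m x x) x) z
    = m (m x x) (m z x) + m (m x x) (m z x) + m (m x x) (m z x)"
proof -
  define F where "F a b c = m (m (m a b) x) c - m (m a b) (m x c)" for a b c
  have "F z x x + F x z x + F x x z = 0"
  proof (rule cubic_polarization)
    show "F a a a = 0" for a
      unfolding F_def using jordan_identity[of a x] by simp
    show "v + v = 0 \<Longrightarrow> v = 0" for v :: 'a
      by (erule double_eq_0[OF assms])
  qed (simp_all add: F_def mult_distribs)
  then show ?thesis
    unfolding F_def by (simp add: mult_commute[of x z] mult_commute[of "m z x" "m x x"] algebra_simps)
qed

lemma mult_nilpotent_of_square_eq_0:
  assumes "(2::'k) \<noteq> 0" and "m i i = 0"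
  shows "m (m (m w i) i) i = 0"
proof -
  have "m (m (m w i) i) i + m (m (m w i) i) i = 0"
    using jordan_identity_linearized[OF assms(1), of w i] assms(2) by simp
  then show ?thesis
    by (rule double_eq_0[OF assms(1)])
qed

lemma cube_mult_inverse:
  assumes "(2::'k) \<noteq> 0" and "unit_elt m e" and "m u y = e"
  shows "m (m (m u u) u) y = m u u"
proof -
  have "m y u = e"
    using assms(3) mult_commute by metis
  then show ?thesis
    using jordan_identity_linearized[OF assms(1), of y u] assms(2)
    by (simp add: unit_elt_def algebra_simps)
qed

lemma ideal_add: "alg_ideal sc m P \<Longrightarrow> x \<in> P \<Longrightarrow> y \<in> P \<Longrightarrow> x + y \<in> P"
  and ideal_minus: "alg_ideal sc m P \<Longrightarrow> x \<in> P \<Longrightarrow> - x \<in> P"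
  and ideal_zero: "alg_ideal sc m P \<Longrightarrow> 0 \<in> P"
  using module.subspace_add[OF module] module.subspace_neg[OF module]
    module.subspace_0[OF module]
  by (auto simp: alg_ideal_def)

lemma proper_idealD: "proper_ideal sc m P \<Longrightarrow> alg_ideal sc m P"
  by (simp add: proper_ideal_def)

lemma ideal_mult_left: "alg_ideal sc m P \<Longrightarrow> a \<in> P \<Longrightarrow> m a x \<in> P"
  and ideal_mult_right: "alg_ideal sc m P \<Longrightarrow> a \<in> P \<Longrightarrow> m x a \<in> P"
  by (auto simp: alg_ideal_def)

lemma set_prod_eq_0:
  assumes "\<And>a b. a \<in> A \<Longrightarrow> b \<in> B \<Longrightarrow> m a b = 0"
  shows "set_prod sc m A B = {0}"
proof -
  interpret module sc by (rule module)
  have "{m a b | a b. a \<in> A \<and> b \<in> B} \<subseteq> {0}"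
    using assms by blast
  then have "set_prod sc m A B \<subseteq> span {0}"
    unfolding set_prod_def by (rule span_mono)
  moreover have "span {0} = {0}"
    by simp
  ultimately show ?thesis
    using span_zero[of "{m a b | a b. a \<in> A \<and> b \<in> B}"] by (auto simp: set_prod_def)
qed

end

locale jordan_derivation_inv_values = jordan_alg sc m
  for sc :: "'k::field \<Rightarrow> 'a::ab_group_add \<Rightarrow> 'a" and m +
  fixes e :: 'a and d :: "'a \<Rightarrow> 'a"
  assumes two_neq_0: "(2::'k) \<noteq> 0"
    and unit: "unit_elt m e"
    and inv_values: "derivation_inv_values sc m e d"
begin

lemma mult_unit_left [simp]: "m e x = x" and mult_unit_right [simp]: "m x e = x"
  using unit by (auto simp: unit_elt_def)

lemma derivation_mult: "d (m x y) = m (d x) y + m x (d y)"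
  using inv_values by (simp add: derivation_inv_values_def derivation_def)

lemma derivation_invertible:
  assumes "d x \<noteq> 0"
  obtains y where "m (d x) y = e" and "m (m (d x) (d x)) y = d x"
  using inv_values assms by (auto simp: derivation_inv_values_def invertible_elt_def)

lemma unit_notin_proper_ideal:
  assumes "proper_ideal sc m P"
  shows "e \<notin> P"
proof
  assume "e \<in> P"
  then have "m e x \<in> P" for x
    by (rule ideal_mult_left[OF proper_idealD[OF assms]])
  then have "P = UNIV"
    by auto
  then show False
    using assms by (simp add: proper_ideal_def)
qed

lemma derivation_in_proper_ideal_eq_0:
  assumes P: "proper_ideal sc m P" and "d z \<in> P"
  shows "d z = 0"
proof (rule ccontr)
  assume "d z \<noteq> 0"
  then obtain y where "m (d z) y = e"
    by (rule derivation_invertible)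
  then have "e \<in> P"
    using ideal_mult_left[OF proper_idealD[OF P] \<open>d z \<in> P\<close>, of y] by simp
  then show False
    using unit_notin_proper_ideal[OF P] by contradiction
qed

lemma unit_decomposition:
  assumes P: "proper_ideal sc m P" and "x\<^sub>0 \<in> P" and "d x\<^sub>0 \<noteq> 0"
  obtains i x\<^sub>1 where "i \<in> P" and "x\<^sub>1 \<in> P" and "e = i + d x\<^sub>1"
proof -
  obtain y where "m (d x\<^sub>0) y = e"
    using assms(3) by (rule derivation_invertible)
  then have "e = - m x\<^sub>0 (d y) + d (m x\<^sub>0 y)"
    using derivation_mult[of x\<^sub>0 y] by (simp add: algebra_simps)
  then show thesis
    using that ideal_minus ideal_mult_left proper_idealD[OF P] assms(2) by blast
qed

lemma kernel_mult_derivation_eq_0: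
  assumes P: "proper_ideal sc m P" and "k \<in> P" and "d k = 0"
  shows "m k (d a) = 0"
proof -
  have "d (m k a) = m k (d a)"
    using derivation_mult[of k a] assms(3) by simp
  moreover have "m k (d a) \<in> P"
    using proper_idealD[OF P] assms(2) by (rule ideal_mult_left)
  ultimately show ?thesis
    using derivation_in_proper_ideal_eq_0[OF P, of "m k a"] by simp
qed

lemma derivation_mult_in_ideal:
  "alg_ideal sc m P \<Longrightarrow> a \<in> P \<Longrightarrow> b \<in> P \<Longrightarrow> d (m a b) \<in> P"
  unfolding derivation_mult by (simp add: ideal_add ideal_mult_left ideal_mult_right)

lemma ideal_part_of_unit_square_eq_0:
  assumes P: "proper_ideal sc m P" and "i \<in> P" and e: "e = i + d x\<^sub>1"
  shows "m i i = 0"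
proof -
  define u where "u = d x\<^sub>1"
  have "u \<noteq> 0"
    using e assms(2) unit_notin_proper_ideal[OF P] unfolding u_def by auto
  then obtain y where uy: "m u y = e" and uuy: "m (m u u) y = u"
    unfolding u_def by (rule derivation_invertible)
  define f where "f = m i i"
  have "f \<in> P"
    unfolding f_def using proper_idealD[OF P] assms(2) by (rule ideal_mult_left)
  moreover have "d f = 0"
    unfolding f_def using proper_idealD[OF P] assms(2) assms(2)
    by (intro derivation_in_proper_ideal_eq_0[OF P] derivation_mult_in_ideal)
  ultimately have "m f u = 0"
    unfolding u_def using P by (intro kernel_mult_derivation_eq_0)
  have "i = e - u"
    using e unfolding u_def by simp
  then have "f = e - u - u + m u u"
    unfolding f_def by (simp add: mult_diff_left mult_diff_right)
  then have "m (m f u) y = f"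
    using uy uuy cube_mult_inverse[OF two_neq_0 unit uy]
    by (simp add: mult_add_left mult_diff_left)
  then show ?thesis
    using \<open>m f u = 0\<close> unfolding f_def by simp
qed

lemma proper_ideal_kernel_trivial:
  assumes P: "proper_ideal sc m P" and "x\<^sub>0 \<in> P" and "d x\<^sub>0 \<noteq> 0"
    and "z \<in> P" and "d z = 0"
  shows "z = 0"
proof -
  obtain i x\<^sub>1 where i: "i \<in> P" and e: "e = i + d x\<^sub>1"
    using assms(1-3) by (rule unit_decomposition)
  have "z = m z e"
    by simp
  also have "\<dots> = m z i + m z (d x\<^sub>1)"
    unfolding e by (rule mult_add_right)
  also have "m z (d x\<^sub>1) = 0"
    using P assms(4,5) by (rule kernel_mult_derivation_eq_0)
  finally have "z = m z i"
    by simp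
  then have "z = m (m (m z i) i) i"
    by simp
  also have "\<dots> = 0"
    using two_neq_0 ideal_part_of_unit_square_eq_0[OF P i e]
    by (rule mult_nilpotent_of_square_eq_0)
  finally show ?thesis .
qed

lemma proper_ideal_maximal:
  assumes P: "proper_ideal sc m P" and "x\<^sub>0 \<in> P" and "d x\<^sub>0 \<noteq> 0"
    and B: "proper_ideal sc m B" and "P \<subseteq> B"
  shows "B = P"
proof
  show "B \<subseteq> P"
  proof
    fix z assume "z \<in> B"
    obtain i x\<^sub>1 where i: "i \<in> P" and x\<^sub>1: "x\<^sub>1 \<in> P" and e: "e = i + d x\<^sub>1"
      using assms(1-3) by (rule unit_decomposition)
    have "d (m x\<^sub>1 z) = 0"
      using proper_idealD[OF B] \<open>P \<subseteq> B\<close> x\<^sub>1 \<open>z \<in> B\<close>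
      by (intro derivation_in_proper_ideal_eq_0[OF B] derivation_mult_in_ideal) auto
    then have "m (d x\<^sub>1) z = - m x\<^sub>1 (d z)"
      using derivation_mult[of x\<^sub>1 z] by (simp add: eq_neg_iff_add_eq_0)
    then have "m (d x\<^sub>1) z \<in> P"
      using proper_idealD[OF P] x\<^sub>1 by (simp add: ideal_minus ideal_mult_left)
    moreover have "m i z \<in> P"
      using proper_idealD[OF P] i by (rule ideal_mult_left)
    moreover have "z = m i z + m (d x\<^sub>1) z"
      using mult_add_left[of i "d x\<^sub>1" z] by (simp flip: e)
    ultimately show "z \<in> P"
      using ideal_add[OF proper_idealD[OF P]] by metis
  qed
qed (rule \<open>P \<subseteq> B\<close>)

lemma proper_ideal_mult_eq_0:
  assumes P: "proper_ideal sc m P" and "x\<^sub>0 \<in> P" and "d x\<^sub>0 \<noteq> 0"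
    and "a \<in> P" and "b \<in> P"
  shows "m a b = 0"
proof (rule proper_ideal_kernel_trivial[OF assms(1-3)])
  show "m a b \<in> P"
    using proper_idealD[OF P] assms(4) by (rule ideal_mult_left)
  show "d (m a b) = 0"
    using proper_idealD[OF P] assms(4,5)
    by (intro derivation_in_proper_ideal_eq_0[OF P] derivation_mult_in_ideal)
qed

end

theorem lemma1:
  fixes sc :: "'k::field \<Rightarrow> 'a::ab_group_add \<Rightarrow> 'a"
    and m :: "'a \<Rightarrow> 'a \<Rightarrow> 'a" and e :: 'a and d :: "'a \<Rightarrow> 'a" and I :: "'a set"
  assumes char2: "(2::'k) \<noteq> 0" and char3: "(3::'k) \<noteq> 0"
    and J: "jordan_algebra sc m"
    and unit: "unit_elt m e"
    and d: "derivation_inv_values sc m e d"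
    and I: "proper_ideal sc m I"
    and notker: "\<not> I \<subseteq> {x. d x = 0}"
  shows "(\<forall>I1 I2. proper_ideal sc m I1 \<and> proper_ideal sc m I2 \<and> I1 \<subseteq> I \<and> I \<subseteq> I2 \<longrightarrow>
            I2 = I \<and> (I1 \<noteq> {0} \<longrightarrow> I1 = I))
         \<and> set_prod sc m (set_prod sc m I I) I = {0}"
proof -
  interpret jordan_derivation_inv_values sc m e d
    using J char2 unit d by unfold_locales
  obtain x\<^sub>0 where x\<^sub>0: "x\<^sub>0 \<in> I" "d x\<^sub>0 \<noteq> 0"
    using notker by auto
  have "I2 = I \<and> (I1 \<noteq> {0} \<longrightarrow> I1 = I)"
    if I1: "proper_ideal sc m I1" and I2: "proper_ideal sc m I2"
      and "I1 \<subseteq> I" and "I \<subseteq> I2" for I1 I2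
  proof (intro conjI impI)
    show "I2 = I"
      using I x\<^sub>0 I2 \<open>I \<subseteq> I2\<close> by (rule proper_ideal_maximal)
    assume "I1 \<noteq> {0}"
    then obtain w where "w \<in> I1" and "w \<noteq> 0"
      using ideal_zero[OF proper_idealD[OF I1]] by blast
    then have "d w \<noteq> 0"
      using proper_ideal_kernel_trivial[OF I x\<^sub>0] \<open>I1 \<subseteq> I\<close> by blast
    then show "I1 = I"
      using proper_ideal_maximal[OF I1 \<open>w \<in> I1\<close> _ I \<open>I1 \<subseteq> I\<close>] by simp
  qed
  moreover have "set_prod sc m I I = {0}"
    using proper_ideal_mult_eq_0[OF I x\<^sub>0] by (rule set_prod_eq_0)
  moreover have "set_prod sc m {0} I = {0}"
    by (rule set_prod_eq_0) simp
  ultimately show ?thesis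
    by auto
qed

end
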